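(* Let $s\ge1$ and $v\ge 2$ be integers. If there exists an orthogonal array OA$(s,2s,v)$, then there exists a $(t_i,t_o,s,v)$-AONT for all integers $t_i,t_o$ with $1\le t_i\le t_o\le s$.
   Context: An $(N,k,v)$-array is an $N\times k$ array with entries from an alphabet $\Gamma$ of size $v$. For a set $D$ of columns, the array is unbiased with respect to $D$ if the rows of the subarray consisting of the columns in $D$ contain every $|D|$-tuple over $\Gamma$ exactly $N/v^{|D|}$ times. An orthogonal array OA$(t,k,v)$ is a $(v^t,k,v)$-array that is unbiased with respect to every set of $t$ columns. For integers $1\le t_i\le t_o\le s$, a $(t_i,t_o,s,v)$-all-or-nothing transform (AONT) is a $(v^s,2s,v)$-array with columns labelled $1,\dots,2s$ that is unbiased with respect to $\{1,\dots,s\}$, with respect to $\{s+1,\dots,2s\}$, and with respect to $I\cup J$ for every $I\subseteq\{1,\dots,s\}$ with $|I|=t_i$ and every $J\subseteq\{s+1,\dots,2s\}$ with $|J|=s-t_o$. *)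

theory Defs
  imports Main
begin

definition is_array :: "'a set \<Rightarrow> nat \<Rightarrow> nat \<Rightarrow> (nat \<Rightarrow> nat \<Rightarrow> 'a) \<Rightarrow> bool" where
  "is_array G N k A \<longleftrightarrow> (\<forall>i<N. \<forall>j\<in>{1..k}. A i j \<in> G)"

text \<open>Unbiased w.r.t. column set D: every |D|-tuple over G (a map D -> G)
 occurs in exactly N / v^|D| rows (stated multiplicatively).\<close>

definition unbiased :: "'a set \<Rightarrow> nat \<Rightarrow> (nat \<Rightarrow> nat \<Rightarrow> 'a) \<Rightarrow> nat set \<Rightarrow> bool" where
  "unbiased G N A D \<longleftrightarrow>
     (\<forall>f. (\<forall>j\<in>D. f j \<in> G) \<longrightarrow>
        card {i. i < N \<and> (\<forall>j\<in>D. A i j = f j)} * card G ^ card D = N)"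

definition is_OA :: "'a set \<Rightarrow> nat \<Rightarrow> nat \<Rightarrow> (nat \<Rightarrow> nat \<Rightarrow> 'a) \<Rightarrow> bool" where
  "is_OA G t k A \<longleftrightarrow> is_array G (card G ^ t) k A \<and>
     (\<forall>D. D \<subseteq> {1..k} \<and> card D = t \<longrightarrow> unbiased G (card G ^ t) A D)"

definition is_AONT :: "'a set \<Rightarrow> nat \<Rightarrow> nat \<Rightarrow> nat \<Rightarrow> (nat \<Rightarrow> nat \<Rightarrow> 'a) \<Rightarrow> bool" where
  "is_AONT G ti to s A \<longleftrightarrow> is_array G (card G ^ s) (2 * s) A \<and>
     unbiased G (card G ^ s) A {1..s} \<and>
     unbiased G (card G ^ s) A {s+1..2*s} \<and>
     (\<forall>I J. I \<subseteq> {1..s} \<and> card I = ti \<and> J \<subseteq> {s+1..2*s} \<and> card J = s - to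
        \<longrightarrow> unbiased G (card G ^ s) A (I \<union> J))"

end

theory Submission
  imports Defs
begin

text \<open>An OA(s, 2s, v) is itself an AONT: unbiasedness with respect to a column set passes
  to every subset of it, and each of the column sets required of an AONT has at most
  s elements, since ti + (s - to) \<le> s.\<close>

lemma unbiased_Diff_singleton:
  assumes unb: "unbiased G N A D" and "finite D" and "finite G" and "G \<noteq> {}"
    and x: "x \<in> D" and entries: "\<forall>i<N. A i x \<in> G"
  shows "unbiased G N A (D - {x})"
  unfolding unbiased_def
proof (intro allI impI)
  fix f assume f: "\<forall>j\<in>D - {x}. f j \<in> G"
  define rows where "rows a = {i. i < N \<and> (\<forall>j\<in>D. A i j = (f(x := a)) j)}" for a
  have rows_card: "card (rows a) * card G ^ card D = N" if "a \<in> G" for a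
    using unb f that unfolding unbiased_def rows_def by auto
  obtain a0 where a0: "a0 \<in> G" using \<open>G \<noteq> {}\<close> by blast
  have "card G ^ card D \<noteq> 0" using \<open>finite G\<close> \<open>G \<noteq> {}\<close> by simp
  then have rows_card_eq: "card (rows a) = card (rows a0)" if "a \<in> G" for a
    using rows_card[OF that] rows_card[OF a0] by (metis mult_right_cancel)
  have split: "{i. i < N \<and> (\<forall>j\<in>D - {x}. A i j = f j)} = (\<Union>a\<in>G. rows a)"
    using entries unfolding rows_def by (fastforce split: if_splits)
  have "card (\<Union>a\<in>G. rows a) = (\<Sum>a\<in>G. card (rows a))"
    using \<open>finite G\<close> x by (intro card_UN_disjoint) (auto simp: rows_def)
  also have "\<dots> = card G * card (rows a0)"
    using rows_card_eq by simp
  finally have "card {i. i < N \<and> (\<forall>j\<in>D - {x}. A i j = f j)} = card G * card (rows a0)"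
    using split by simp
  moreover have "card D = Suc (card (D - {x}))"
    using card_Suc_Diff1[OF \<open>finite D\<close> x] by simp
  ultimately show "card {i. i < N \<and> (\<forall>j\<in>D - {x}. A i j = f j)} * card G ^ card (D - {x}) = N"
    using rows_card[OF a0] by (simp add: mult_ac)
qed

lemma unbiased_subset:
  assumes unb: "unbiased G N A D" and "E \<subseteq> D" and "finite D" and "finite G" and "G \<noteq> {}"
    and entries: "\<forall>i<N. \<forall>j\<in>D. A i j \<in> G"
  shows "unbiased G N A E"
proof -
  have "unbiased G N A (D - F)" if "F \<subseteq> D" for F
    using finite_subset[OF that \<open>finite D\<close>] that
  proof (induction F rule: finite_induct)
    case empty
    then show ?case using unb by simp
  next
    case (insert y F)
    then have IH: "unbiased G N A (D - F)" and y: "y \<in> D - F" by blast+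
    have "\<forall>i<N. A i y \<in> G" using entries y by blast
    then have "unbiased G N A (D - F - {y})"
      using unbiased_Diff_singleton[OF IH _ \<open>finite G\<close> \<open>G \<noteq> {}\<close> y] \<open>finite D\<close> by simp
    then show ?case by (metis Diff_insert)
  qed
  then have "unbiased G N A (D - (D - E))" by blast
  moreover have "D - (D - E) = E" using \<open>E \<subseteq> D\<close> by blast
  ultimately show ?thesis by simp
qed

lemma OA_unbiased_small_subset:
  assumes oa: "is_OA G t k A" and "finite G" and "G \<noteq> {}"
    and E: "E \<subseteq> {1..k}" "card E \<le> t" and "t \<le> k"
  shows "unbiased G (card G ^ t) A E"
proof -
  have "finite E" using E(1) by (rule finite_subset) simp
  then have "card ({1..k} - E) = k - card E"
    using E(1) by (simp add: card_Diff_subset)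
  then obtain F where F: "F \<subseteq> {1..k} - E" "card F = t - card E"
    using \<open>t \<le> k\<close> by (metis diff_le_mono obtain_subset_with_card_n)
  have "finite F" using F(1) by (rule finite_subset) simp
  have "card (E \<union> F) = t"
    using \<open>finite E\<close> \<open>finite F\<close> F E by (subst card_Un_disjoint) auto
  moreover have EF: "E \<union> F \<subseteq> {1..k}" using E F by blast
  ultimately have "unbiased G (card G ^ t) A (E \<union> F)"
    using oa by (simp add: is_OA_def)
  moreover have "\<forall>i<card G ^ t. \<forall>j\<in>E \<union> F. A i j \<in> G"
    using oa EF unfolding is_OA_def is_array_def by blast
  moreover have "finite (E \<union> F)"
    using \<open>finite E\<close> \<open>finite F\<close> by blast
  ultimately show ?thesis
    using unbiased_subset[OF _ Un_upper1 _ \<open>finite G\<close> \<open>G \<noteq> {}\<close>] by blast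
qed

theorem mainTheorem2:
  fixes G :: "'a set" and s v :: nat
  assumes "s \<ge> 1" and "v \<ge> 2" and "finite G" and "card G = v"
    and "\<exists>A. is_OA G s (2 * s) A"
  shows "\<forall>ti to. 1 \<le> ti \<and> ti \<le> to \<and> to \<le> s \<longrightarrow> (\<exists>A. is_AONT G ti to s A)"
proof (intro allI impI)
  fix ti to assume t: "1 \<le> ti \<and> ti \<le> to \<and> to \<le> s"
  obtain A where oa: "is_OA G s (2 * s) A" using assms by blast
  have "G \<noteq> {}" using assms by auto
  note small = OA_unbiased_small_subset[OF oa \<open>finite G\<close> \<open>G \<noteq> {}\<close>]
  have "unbiased G (card G ^ s) A (I \<union> J)"
    if "I \<subseteq> {1..s}" "card I = ti" "J \<subseteq> {s+1..2*s}" "card J = s - to" for I J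
  proof (rule small)
    show "I \<union> J \<subseteq> {1..2 * s}" using that by auto
    have "card (I \<union> J) \<le> card I + card J" by (rule card_Un_le)
    then show "card (I \<union> J) \<le> s" using that t by arith
  qed simp
  moreover have "unbiased G (card G ^ s) A {1..s}" "unbiased G (card G ^ s) A {s+1..2*s}"
    by (auto intro: small)
  ultimately show "\<exists>A. is_AONT G ti to s A"
    using oa unfolding is_AONT_def is_OA_def by blast
qed

end
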